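(* Let $R$ be a transit function on a non-empty finite set $V$ satisfying axioms $(b2)$ and $(b3)$. Then for any $u,v,w\in V$ there exists $x\in R(u,v)\cap R(u,w)$ such that $R(x,v)\cap R(x,w)=\{x\}$.
   Context: A transit function on $V$ is a map $R:V\times V\to 2^V$ with $(t1)$ $u\in R(u,v)$, $(t2)$ $R(u,v)=R(v,u)$, $(t3)$ $R(u,u)=\{u\}$ for all $u,v\in V$. $(b2)$: if $x\in R(u,v)$ and $y\in R(u,x)$ then $y\in R(u,v)$. $(b3)$: if $x\in R(u,v)$ and $y\in R(u,x)$ then $x\in R(y,v)$. *)

theory Defs
  imports Main
begin

definition transit_function :: "'a set \<Rightarrow> ('a \<Rightarrow> 'a \<Rightarrow> 'a set) \<Rightarrow> bool" where
  "transit_function V R \<longleftrightarrow>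
     (\<forall>u\<in>V. \<forall>v\<in>V. R u v \<subseteq> V) \<and>
     (\<forall>u\<in>V. \<forall>v\<in>V. u \<in> R u v) \<and>
     (\<forall>u\<in>V. \<forall>v\<in>V. R u v = R v u) \<and>
     (\<forall>u\<in>V. R u u = {u})"

definition axiom_b2 :: "'a set \<Rightarrow> ('a \<Rightarrow> 'a \<Rightarrow> 'a set) \<Rightarrow> bool" where
  "axiom_b2 V R \<longleftrightarrow>
     (\<forall>u\<in>V. \<forall>v\<in>V. \<forall>x\<in>V. \<forall>y\<in>V. x \<in> R u v \<and> y \<in> R u x \<longrightarrow> y \<in> R u v)"

definition axiom_b3 :: "'a set \<Rightarrow> ('a \<Rightarrow> 'a \<Rightarrow> 'a set) \<Rightarrow> bool" where
  "axiom_b3 V R \<longleftrightarrow>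
     (\<forall>u\<in>V. \<forall>v\<in>V. \<forall>x\<in>V. \<forall>y\<in>V. x \<in> R u v \<and> y \<in> R u x \<longrightarrow> x \<in> R y v)"

end

theory Submission
  imports Defs
begin

text \<open>Among the points x of R(u,v) \<inter> R(u,w) choose one for which R(x,v) \<inter> R(x,w) has least
  cardinality. By (b2), any y \<noteq> x in R(x,v) \<inter> R(x,w) again lies in R(u,v) \<inter> R(u,w) and satisfies
  R(y,v) \<inter> R(y,w) \<subseteq> R(x,v) \<inter> R(x,w); by (b3), x is not in R(y,v), so the inclusion is strict,
  contradicting minimality.\<close>

lemma transit_function_interval_subset:
  assumes "transit_function V R" "u \<in> V" "v \<in> V"
  shows "R u v \<subseteq> V"
  using assms unfolding transit_function_def by blast

lemma transit_function_left_mem: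
  assumes "transit_function V R" "u \<in> V" "v \<in> V"
  shows "u \<in> R u v"
  using assms unfolding transit_function_def by blast

lemma axiom_b2_interval_mono:
  assumes R: "transit_function V R" and b2: "axiom_b2 V R"
    and "u \<in> V" "v \<in> V" and x: "x \<in> R u v"
  shows "R x v \<subseteq> R u v"
proof
  fix y assume y: "y \<in> R x v"
  have "x \<in> V" using x transit_function_interval_subset[OF R] assms(3,4) by blast
  then have "y \<in> V" using y transit_function_interval_subset[OF R] assms(4) by blast
  have "x \<in> R v u" "y \<in> R v x"
    using R x y \<open>x \<in> V\<close> assms(3,4) unfolding transit_function_def by auto
  then have "y \<in> R v u"
    using b2 \<open>x \<in> V\<close> \<open>y \<in> V\<close> assms(3,4) unfolding axiom_b2_def by blast
  then show "y \<in> R u v"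
    using R assms(3,4) unfolding transit_function_def by blast
qed

lemma axiom_b3_interval_antisym:
  assumes R: "transit_function V R" and b3: "axiom_b3 V R"
    and "x \<in> V" "v \<in> V" and "y \<in> R x v" "x \<in> R y v"
  shows "x = y"
proof -
  have "y \<in> V" using assms(3-5) transit_function_interval_subset[OF R] by blast
  have "x \<in> R v y" "y \<in> R v x"
    using R assms(3-6) \<open>y \<in> V\<close> unfolding transit_function_def by auto
  then have "x \<in> R y y"
    using b3 assms(3,4) \<open>y \<in> V\<close> unfolding axiom_b3_def by blast
  then show "x = y"
    using R \<open>y \<in> V\<close> unfolding transit_function_def by blast
qed

lemma interval_meet_mono:
  assumes R: "transit_function V R" and b2: "axiom_b2 V R"
    and "u \<in> V" "v \<in> V" "w \<in> V" and "x \<in> R u v \<inter> R u w"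
  shows "R x v \<inter> R x w \<subseteq> R u v \<inter> R u w"
  using axiom_b2_interval_mono[OF R b2] assms(3-6) by blast

lemma interval_meet_psubset:
  assumes R: "transit_function V R" and b2: "axiom_b2 V R" and b3: "axiom_b3 V R"
    and "x \<in> V" "v \<in> V" "w \<in> V"
    and y: "y \<in> R x v \<inter> R x w" "y \<noteq> x"
  shows "R y v \<inter> R y w \<subset> R x v \<inter> R x w"
proof -
  have "R y v \<inter> R y w \<subseteq> R x v \<inter> R x w"
    using interval_meet_mono[OF R b2 assms(4-6) y(1)] .
  moreover have "x \<notin> R y v"
    using axiom_b3_interval_antisym[OF R b3 \<open>x \<in> V\<close> \<open>v \<in> V\<close>] y by blast
  moreover have "x \<in> R x v \<inter> R x w"
    using transit_function_left_mem[OF R] assms(4-6) by blast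
  ultimately show ?thesis by blast
qed

theorem lemma3:
  fixes V :: "'a set" and R :: "'a \<Rightarrow> 'a \<Rightarrow> 'a set"
  assumes "finite V" and "V \<noteq> {}"
    and "transit_function V R" and "axiom_b2 V R" and "axiom_b3 V R"
    and "u \<in> V" and "v \<in> V" and "w \<in> V"
  shows "\<exists>x \<in> R u v \<inter> R u w. R x v \<inter> R x w = {x}"
proof -
  note R = assms(3) and b2 = assms(4) and b3 = assms(5)
  define S where "S = R u v \<inter> R u w"
  have "u \<in> S" using transit_function_left_mem[OF R] assms(6-8) unfolding S_def by blast
  then obtain x where x: "x \<in> S"
    and x_min: "\<And>y. y \<in> S \<Longrightarrow> card (R x v \<inter> R x w) \<le> card (R y v \<inter> R y w)"
    using ex_has_least_nat[of "\<lambda>x. x \<in> S" u "\<lambda>x. card (R x v \<inter> R x w)"] by auto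
  have "x \<in> V" using x transit_function_interval_subset[OF R] assms(6,7) unfolding S_def by blast
  have meet_finite: "finite (R x v \<inter> R x w)"
    using finite_subset[OF transit_function_interval_subset[OF R \<open>x \<in> V\<close> assms(7)] assms(1)]
    by simp
  have meet_in_S: "R x v \<inter> R x w \<subseteq> S"
    using interval_meet_mono[OF R b2 assms(6-8)] x unfolding S_def by blast
  have "y = x" if y: "y \<in> R x v \<inter> R x w" for y
  proof (rule ccontr)
    assume "y \<noteq> x"
    then have "card (R y v \<inter> R y w) < card (R x v \<inter> R x w)"
      using psubset_card_mono[OF meet_finite interval_meet_psubset[OF R b2 b3 \<open>x \<in> V\<close> assms(7,8) y]]
      by blast
    then show False using x_min meet_in_S y by fastforce
  qed
  moreover have "x \<in> R x v \<inter> R x w"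
    using transit_function_left_mem[OF R \<open>x \<in> V\<close>] assms(7,8) by blast
  ultimately show ?thesis using x unfolding S_def by blast
qed

end
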